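(* For $k\ge4$ and $d\in[d_{\mathrm{lbd}}(k),d_{\mathrm{ubd}}(k)]$, $|\Psi_d'(x)|<1$ for all $x\in[\frac12-\frac1{2^k},\frac12]$.
   Context: $\hat\Psi(x)=\frac{1-2x^{k-1}}{1-x^{k-1}}$, $\dot\Psi(v)=\frac{1-v^{d-1}}{2-v^{d-1}}$, $\Psi_d=\dot\Psi\circ\hat\Psi$ ($d$ real). $d_{\mathrm{lbd}}(4)=16.7$, $d_{\mathrm{lbd}}(k)=(2^{k-1}-2)k\log2$ for $k\ge5$; $d_{\mathrm{ubd}}(k)=2^{k-1}k\log2$. *)

theory Defs
  imports "HOL-Analysis.Analysis"
begin

definition Psi_hat :: "nat \<Rightarrow> real \<Rightarrow> real" where
  "Psi_hat k x = (1 - 2 * x ^ (k - 1)) / (1 - x ^ (k - 1))"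

text \<open>d is real, so v^(d-1) is the real power; on the relevant range v > 0.\<close>
definition Psi_dot :: "real \<Rightarrow> real \<Rightarrow> real" where
  "Psi_dot d v = (1 - v powr (d - 1)) / (2 - v powr (d - 1))"

definition Psi :: "nat \<Rightarrow> real \<Rightarrow> real \<Rightarrow> real" where
  "Psi k d = Psi_dot d \<circ> Psi_hat k"

definition d_lbd :: "nat \<Rightarrow> real" where
  "d_lbd k = (if k = 4 then 16.7 else (2 ^ (k - 1) - 2) * real k * ln 2)"

definition d_ubd :: "nat \<Rightarrow> real" where
  "d_ubd k = 2 ^ (k - 1) * real k * ln 2"

end

theory Submission
  imports Defs
begin

(* By the chain rule Psi' x = Psi_dot' v * Psi_hat' x with v = Psi_hat k x, and both factors are
   negative. On a subinterval [a, b], Psi_hat' is bounded by its value at b, and v by r = Psi_hat k a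
   because Psi_hat is decreasing. Writing D = d - 1, the factor D v^(D-1) of Psi_dot' v decreases in D
   as soon as D \<ge> 1 / (1 - v), so it is largest at the smallest admissible exponent e = d_lbd k - 1. For k = 4, 5, 6 the resulting bound is checked
   numerically (for k = 4 on four subintervals). For k \<ge> 7 and n = k - 1, Bernoulli's inequality gives
   1 - r \<ge> (1 - n/2^n)/2^n, hence r^(e-1) \<le> 2^-n, and what remains are the inequalities
   8(n+1)(n+2) \<le> 7 * 2^n and 32n(n+1) \<le> 21 * 2^n for n \<ge> 6. *)

definition Psi_hat_deriv :: "nat \<Rightarrow> real \<Rightarrow> real" where
  "Psi_hat_deriv k x = - (real (k - 1) * x ^ (k - 2)) / (1 - x ^ (k - 1))\<^sup>2"

definition Psi_dot_deriv :: "real \<Rightarrow> real \<Rightarrow> real" where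
  "Psi_dot_deriv d v = - ((d - 1) * v powr (d - 2)) / (2 - v powr (d - 1))\<^sup>2"

lemma Psi_hat_has_real_derivative:
  assumes "x ^ (k - 1) \<noteq> 1"
  shows "(Psi_hat k has_real_derivative Psi_hat_deriv k x) (at x)"
  unfolding Psi_hat_def[abs_def] Psi_hat_deriv_def
  using assms
  by (auto intro!: derivative_eq_intros simp: field_simps power2_eq_square numeral_2_eq_2)

lemma Psi_dot_has_real_derivative:
  assumes "0 < v" "v powr (d - 1) \<noteq> 2"
  shows "(Psi_dot d has_real_derivative Psi_dot_deriv d v) (at v)"
  unfolding Psi_dot_def[abs_def] Psi_dot_deriv_def
  using assms
  by (auto intro!: derivative_eq_intros simp: field_simps power2_eq_square)

lemma Psi_has_real_derivative:
  assumes "x ^ (k - 1) \<noteq> 1" "0 < Psi_hat k x" "Psi_hat k x powr (d - 1) \<noteq> 2"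
  shows "(Psi k d has_real_derivative Psi_dot_deriv d (Psi_hat k x) * Psi_hat_deriv k x) (at x)"
  unfolding Psi_def
  using DERIV_chain[OF Psi_dot_has_real_derivative Psi_hat_has_real_derivative] assms
  by simp

lemma Psi_hat_eq:
  assumes "x ^ (k - 1) \<noteq> 1"
  shows "Psi_hat k x = 2 - 1 / (1 - x ^ (k - 1))"
  using assms by (simp add: Psi_hat_def field_simps)

lemma Psi_hat_pos_lt_one:
  assumes "0 < x ^ (k - 1)" "x ^ (k - 1) < 1/2"
  shows "0 < Psi_hat k x" "Psi_hat k x < 1"
  using assms by (simp_all add: Psi_hat_def field_simps)

lemma Psi_hat_antimono:
  assumes "a ^ (k - 1) \<le> x ^ (k - 1)" "x ^ (k - 1) < 1"
  shows "Psi_hat k x \<le> Psi_hat k a"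
proof -
  have "1 / (1 - a ^ (k - 1)) \<le> 1 / (1 - x ^ (k - 1))"
    using assms by (intro divide_left_mono) auto
  with assms show ?thesis by (simp add: Psi_hat_eq)
qed

lemma Psi_hat_le_one_minus_pow:
  assumes "x ^ (k - 1) < 1"
  shows "Psi_hat k x \<le> 1 - x ^ (k - 1)"
  using assms by (simp add: Psi_hat_def field_simps power2_eq_square)

lemma powr_le_exp_of_le_one_minus:
  fixes r t y :: real
  assumes "0 < r" "r \<le> 1 - y" "0 \<le> t"
  shows "r powr t \<le> exp (- (t * y))"
proof -
  have "t * ln r \<le> t * (- y)"
    using ln_le_minus_one[OF \<open>0 < r\<close>] assms by (intro mult_left_mono) auto
  then show ?thesis
    using \<open>0 < r\<close> by (simp add: powr_def)
qed

lemma mult_powr_antimono_exponent: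
  fixes v s t :: real
  assumes "0 < v" "v \<le> 1 - 1 / s" "0 < s" "s \<le> t"
  shows "t * v powr (t - 1) \<le> s * v powr (s - 1)"
proof -
  have "v powr (t - s) \<le> exp (- ((t - s) / s))"
    using powr_le_exp_of_le_one_minus[of v "1 / s" "t - s"] assms by simp
  also have "\<dots> \<le> 1 / (1 + (t - s) / s)"
    using exp_ge_add_one_self[of "(t - s) / s"] assms by (simp add: exp_minus field_simps)
  also have "\<dots> = s / t"
    using assms by (simp add: field_simps)
  finally have "t * v powr (t - s) \<le> s"
    using assms by (simp add: field_simps)
  then have "t * v powr (t - s) * v powr (s - 1) \<le> s * v powr (s - 1)"
    by (rule mult_right_mono) simp
  then show ?thesis
    using \<open>0 < v\<close> by (simp add: powr_add[symmetric] mult.assoc)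
qed

lemma abs_Psi_hat_deriv_le:
  assumes "0 \<le> x" "x \<le> b" "b ^ (k - 1) < 1"
  shows "\<bar>Psi_hat_deriv k x\<bar> \<le> real (k - 1) * b ^ (k - 2) / (1 - b ^ (k - 1))\<^sup>2"
proof -
  have "x ^ (k - 1) \<le> b ^ (k - 1)" "x ^ (k - 2) \<le> b ^ (k - 2)"
    using assms by (simp_all add: power_mono)
  then have "real (k - 1) * x ^ (k - 2) / (1 - x ^ (k - 1))\<^sup>2
      \<le> real (k - 1) * b ^ (k - 2) / (1 - b ^ (k - 1))\<^sup>2"
    using assms by (intro frac_le mult_left_mono power_mono) auto
  then show ?thesis
    using assms by (simp add: Psi_hat_deriv_def)
qed

lemma abs_Psi_dot_deriv_le:
  assumes "0 < v" "v \<le> r" "r \<le> 1 - 1 / e" "1 \<le> e" "e \<le> d - 1"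
    and "r powr (e - 1) \<le> c" "c < 2"
  shows "\<bar>Psi_dot_deriv d v\<bar> \<le> e * c / (2 - c)\<^sup>2"
proof -
  have "0 < 1 / e"
    using assms by simp
  then have "r < 1" "0 < r"
    using assms by linarith+
  have "(d - 1) * v powr (d - 2) \<le> e * v powr (e - 1)"
    using mult_powr_antimono_exponent[of v e "d - 1"] assms by (simp add: algebra_simps)
  also have "\<dots> \<le> e * c"
    using assms powr_mono2[of "e - 1" v r] by (intro mult_left_mono) auto
  finally have num: "(d - 1) * v powr (d - 2) \<le> e * c" .
  have "v powr (d - 1) \<le> v powr e"
    using assms \<open>r < 1\<close> by (intro powr_mono') auto
  also have "\<dots> \<le> r powr e"
    using assms by (intro powr_mono2) auto
  also have "\<dots> \<le> r powr (e - 1)"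
    using \<open>0 < r\<close> \<open>r < 1\<close> by (intro powr_mono') auto
  finally have "(2 - c)\<^sup>2 \<le> (2 - v powr (d - 1))\<^sup>2"
    using assms by (intro power_mono) auto
  moreover have "0 \<le> c"
    using assms(6) by (meson order_trans powr_ge_zero)
  ultimately have "(d - 1) * v powr (d - 2) / (2 - v powr (d - 1))\<^sup>2 \<le> e * c / (2 - c)\<^sup>2"
    using num assms by (intro frac_le) auto
  then show ?thesis
    using assms by (simp add: Psi_dot_deriv_def)
qed

lemma abs_deriv_Psi_lt_one_on_interval:
  fixes a b c r e d x :: real
  assumes "0 < a" "a \<le> x" "x \<le> b" "b ^ (k - 1) < 1/2"
    and "Psi_hat k a \<le> r" "r \<le> 1 - 1 / e" "1 \<le> e" "e \<le> d - 1"
    and "r powr (e - 1) \<le> c" "c < 2"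
    and "e * c / (2 - c)\<^sup>2 * (real (k - 1) * b ^ (k - 2) / (1 - b ^ (k - 1))\<^sup>2) < 1"
  shows "Psi k d differentiable (at x) \<and> \<bar>deriv (Psi k d) x\<bar> < 1"
proof -
  let ?v = "Psi_hat k x"
  have pow: "0 < x ^ (k - 1)" "a ^ (k - 1) \<le> x ^ (k - 1)" "x ^ (k - 1) \<le> b ^ (k - 1)"
    using assms by (simp_all add: power_mono)
  then have v: "0 < ?v" "?v < 1" "?v \<le> r"
    using assms Psi_hat_pos_lt_one[of x k] Psi_hat_antimono[of a k x] by auto
  then have "?v powr (d - 1) \<le> 1"
    using assms by (intro powr_le1) auto
  then have has_deriv: "(Psi k d has_real_derivative Psi_dot_deriv d ?v * Psi_hat_deriv k x) (at x)"
    using v pow assms by (intro Psi_has_real_derivative) auto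
  have "\<bar>Psi_dot_deriv d ?v\<bar> \<le> e * c / (2 - c)\<^sup>2"
    using v assms by (intro abs_Psi_dot_deriv_le) auto
  moreover have "\<bar>Psi_hat_deriv k x\<bar> \<le> real (k - 1) * b ^ (k - 2) / (1 - b ^ (k - 1))\<^sup>2"
    using assms by (intro abs_Psi_hat_deriv_le) auto
  ultimately have "\<bar>Psi_dot_deriv d ?v\<bar> * \<bar>Psi_hat_deriv k x\<bar>
      \<le> e * c / (2 - c)\<^sup>2 * (real (k - 1) * b ^ (k - 2) / (1 - b ^ (k - 1))\<^sup>2)"
    by (meson abs_ge_zero mult_mono order_trans)
  with assms(11) have "\<bar>Psi_dot_deriv d ?v * Psi_hat_deriv k x\<bar> < 1"
    by (simp add: abs_mult)
  then show ?thesis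
    using DERIV_imp_deriv[OF has_deriv] has_deriv real_differentiable_def by auto
qed

lemma abs_deriv_Psi_lt_one_k4:
  assumes "16.7 \<le> d" "7/16 \<le> x" "x \<le> 1/2"
  shows "Psi 4 d differentiable (at x) \<and> \<bar>deriv (Psi 4 d) x\<bar> < 1"
proof -
  have e: "15 \<le> d - 1"
    using assms(1) by simp
  consider "x \<le> 29/64" | "29/64 \<le> x" "x \<le> 30/64" | "30/64 \<le> x" "x \<le> 31/64" | "31/64 \<le> x"
    by linarith
  then show ?thesis
  proof cases
    case 1
    show ?thesis
      by (rule abs_deriv_Psi_lt_one_on_interval[where a="7/16" and b="29/64" and r="909/1000"
            and e=15 and c="(909/1000) powr 14"])
        (use assms 1 e in \<open>simp_all add: Psi_hat_def power_divide\<close>)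
  next
    case 2
    show ?thesis
      by (rule abs_deriv_Psi_lt_one_on_interval[where a="29/64" and b="30/64" and r="449/500"
            and e=15 and c="(449/500) powr 14"])
        (use assms 2 e in \<open>simp_all add: Psi_hat_def power_divide\<close>)
  next
    case 3
    show ?thesis
      by (rule abs_deriv_Psi_lt_one_on_interval[where a="30/64" and b="31/64" and r="443/500"
            and e=15 and c="(443/500) powr 14"])
        (use assms 3 e in \<open>simp_all add: Psi_hat_def power_divide\<close>)
  next
    case 4
    show ?thesis
      by (rule abs_deriv_Psi_lt_one_on_interval[where a="31/64" and b="1/2" and r="109/125"
            and e=15 and c="(109/125) powr 14"])
        (use assms 4 e in \<open>simp_all add: Psi_hat_def power_divide\<close>)
  qed
qed

lemma abs_deriv_Psi_lt_one_k5:
  assumes "d_lbd 5 \<le> d" "15/32 \<le> x" "x \<le> 1/2"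
  shows "Psi 5 d differentiable (at x) \<and> \<bar>deriv (Psi 5 d) x\<bar> < 1"
proof -
  have "45 \<le> d - 1"
    using assms(1) ln2_ge_two_thirds by (simp add: d_lbd_def)
  then show ?thesis
    by (intro abs_deriv_Psi_lt_one_on_interval[where a="15/32" and b="1/2" and r="19/20"
          and e=45 and c="(19/20) powr 44"])
      (use assms in \<open>simp_all add: Psi_hat_def power_divide\<close>)
qed

lemma abs_deriv_Psi_lt_one_k6:
  assumes "d_lbd 6 \<le> d" "31/64 \<le> x" "x \<le> 1/2"
  shows "Psi 6 d differentiable (at x) \<and> \<bar>deriv (Psi 6 d) x\<bar> < 1"
proof -
  have "119 \<le> d - 1"
    using assms(1) ln2_ge_two_thirds by (simp add: d_lbd_def)
  have "(36/37::real) powr (119 - 1) = ((36/37)^8)^14 * (36/37)^6"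
    by (simp add: power_mult[symmetric] power_add[symmetric])
  also have "\<dots> \<le> ((36/37)^8)^14"
    by (rule mult_left_le) (auto simp: power_le_one)
  also have "\<dots> \<le> (81/100)^14"
    by (rule power_mono) (simp_all add: power_divide)
  finally have "(36/37::real) powr (119 - 1) \<le> (81/100)^14" .
  with \<open>119 \<le> d - 1\<close> show ?thesis
    by (intro abs_deriv_Psi_lt_one_on_interval[where a="31/64" and b="1/2" and r="36/37"
          and e=119 and c="(81/100)^14"])
      (use assms in \<open>simp_all add: Psi_hat_def power_divide\<close>)
qed

lemma Suc_mult_Suc_Suc_le_two_pow:
  "6 \<le> n \<Longrightarrow> 8 * (real n + 1) * (real n + 2) \<le> 7 * 2 ^ n"
proof (induction n rule: nat_induct_at_least)
  case base
  then show ?case by simp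
next
  case (Suc n)
  have "real n + 3 \<le> 2 * (real n + 1)"
    using Suc.hyps by simp
  then have "8 * (real n + 2) * (real n + 3) \<le> 8 * (real n + 2) * (2 * (real n + 1))"
    by (intro mult_left_mono) auto
  with Suc.IH show ?case by (simp add: algebra_simps)
qed

lemma mult_Suc_le_two_pow:
  "6 \<le> n \<Longrightarrow> 32 * real n * (real n + 1) \<le> 21 * 2 ^ n"
proof (induction n rule: nat_induct_at_least)
  case base
  then show ?case by simp
next
  case (Suc n)
  have "real n + 2 \<le> 2 * real n"
    using Suc.hyps by simp
  then have "32 * (real n + 1) * (real n + 2) \<le> 32 * (real n + 1) * (2 * real n)"
    by (intro mult_left_mono) auto
  with Suc.IH show ?case by (simp add: algebra_simps)
qed

(* With m = k - 1, N = 2^m and L = ln 2, the exponent (N - 2)(m + 1)L - 1 is d_lbd k - 1, and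
   (1 - m/N)/N is the Bernoulli lower bound for 1 - Psi_hat k (1/2 - 1/2^k). *)
lemma two_mul_le_exponent:
  fixes m N L :: real
  assumes "64 \<le> N" "6 \<le> m" "2/3 \<le> L"
  shows "2 * N \<le> (N - 2) * (m + 1) * L - 1"
proof -
  have "(N - 2) * 7 * (2/3) \<le> (N - 2) * (m + 1) * L"
    using assms by (intro mult_mono) auto
  with assms show ?thesis
    by simp
qed

lemma log_le_exponent_mult_gap:
  fixes m N L :: real
  assumes "64 \<le> N" "6 \<le> m" "8 * (m + 1) * (m + 2) \<le> 7 * N" "2/3 \<le> L"
  shows "m * L \<le> ((N - 2) * (m + 1) * L - 2) * ((1 - m / N) / N)"
proof -
  have "L * (8 * (m + 1) * (m + 2)) \<le> L * (7 * N)"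
    using assms by (intro mult_left_mono) auto
  moreover have "(2/3) * 64 \<le> L * N"
    using assms by (intro mult_mono) auto
  ultimately have "0 \<le> L * N - L * (m + 1) * (m + 2) - 2"
    by (simp add: algebra_simps)
  then have "0 \<le> N * (L * N - L * (m + 1) * (m + 2) - 2) + 2 * L * m * (m + 1) + 2 * m"
    using assms by simp
  also have "\<dots> = ((N - 2) * (m + 1) * L - 2) * (N - m) - m * L * N\<^sup>2"
    by (simp add: algebra_simps power2_eq_square)
  finally have "m * L * N\<^sup>2 / N\<^sup>2 \<le> ((N - 2) * (m + 1) * L - 2) * (N - m) / N\<^sup>2"
    by (intro divide_right_mono) auto
  with assms show ?thesis
    by (simp add: field_simps power2_eq_square)
qed

lemma contraction_factor_lt_one:
  fixes m N L :: real
  assumes "64 \<le> N" "0 \<le> m" "32 * m * (m + 1) \<le> 21 * N" "0 \<le> L" "L \<le> 1"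
  shows "((N - 2) * (m + 1) * L - 1) * (1 / N) / (2 - 1 / N)\<^sup>2
      * (m * (2 / N) / (1 - 1 / N)\<^sup>2) < 1"
proof -
  have "(N - 2) * (m + 1) * L \<le> (N - 2) * (m + 1)"
    using assms by (intro mult_left_le) auto
  then have "(N - 2) * (m + 1) * L - 1 \<le> N * (m + 1)"
    using assms by (simp add: algebra_simps)
  then have "((N - 2) * (m + 1) * L - 1) * (1 / N) * (m * (2 / N)) \<le> N * (m + 1) * (1 / N) * (m * (2 / N))"
    using assms by (intro mult_right_mono) auto
  also have "\<dots> = 2 * m * (m + 1) / N"
    using assms by (simp add: field_simps)
  also have "\<dots> \<le> 21/16"
    using assms by (simp add: field_simps)
  finally have num: "((N - 2) * (m + 1) * L - 1) * (1 / N) * (m * (2 / N)) \<le> 21/16" .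
  have "(3/2)\<^sup>2 * (63/64)\<^sup>2 \<le> (2 - 1 / N)\<^sup>2 * (1 - 1 / N)\<^sup>2"
    using assms by (intro mult_mono power_mono) (auto simp: field_simps)
  then have "2 \<le> (2 - 1 / N)\<^sup>2 * (1 - 1 / N)\<^sup>2"
    by (simp add: power2_eq_square)
  with num have "((N - 2) * (m + 1) * L - 1) * (1 / N) * (m * (2 / N))
      / ((2 - 1 / N)\<^sup>2 * (1 - 1 / N)\<^sup>2) \<le> (21/16) / 2"
    by (intro frac_le) auto
  then show ?thesis
    unfolding times_divide_times_eq by linarith
qed

lemma Psi_hat_left_endpoint_le:
  fixes n :: nat
  assumes "1 \<le> n"
  shows "Psi_hat (Suc n) (1/2 - 1/2 ^ Suc n) \<le> 1 - (1 - n / 2 ^ n) / 2 ^ n"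
proof -
  define a :: real where "a = (1 - 1 / 2 ^ n) / 2"
  have "a < 1/2" "0 \<le> a"
    by (simp_all add: a_def)
  then have "a ^ n < (1/2) ^ n"
    using assms by (intro power_strict_mono) auto
  also have "\<dots> \<le> (1/2) ^ 1"
    using assms by (intro power_decreasing) auto
  finally have "a ^ n < 1" by simp
  have "1 - n / 2 ^ n \<le> (1 - 1 / 2 ^ n :: real) ^ n"
    using Bernoulli_inequality[of "- (1 / 2 ^ n)" n] by simp
  then have "(1 - n / 2 ^ n) / 2 ^ n \<le> a ^ n"
    by (simp add: a_def power_divide divide_right_mono)
  moreover have "1/2 - 1/2 ^ Suc n = a"
    by (simp add: a_def field_simps)
  ultimately show ?thesis
    using Psi_hat_le_one_minus_pow[of a "Suc n"] \<open>a ^ n < 1\<close> by simp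
qed

lemma d_lbd_gap_bounds:
  fixes n :: nat
  assumes n: "6 \<le> n"
  defines "Y \<equiv> (1 - n / 2 ^ n) / 2 ^ n" and "e \<equiv> d_lbd (Suc n) - 1"
  shows "1 \<le> e" "1 - Y \<le> 1 - 1 / e" "(1 - Y) powr (e - 1) \<le> 1 / 2 ^ n"
proof -
  define N :: real where "N = 2 ^ n"
  have "(2::real) ^ 6 \<le> 2 ^ n"
    using n by (intro power_increasing) auto
  then have N: "64 \<le> N"
    by (simp add: N_def)
  have e_eq: "e = (N - 2) * (real n + 1) * ln 2 - 1"
    using n by (simp add: e_def d_lbd_def N_def)
  have "32 * real n * 7 \<le> 32 * real n * (real n + 1)"
    using n by (intro mult_left_mono) auto
  then have "2 * real n \<le> N"
    using mult_Suc_le_two_pow[OF n] by (simp add: N_def)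
  have "2 * N \<le> e"
    using two_mul_le_exponent[OF N _ ln2_ge_two_thirds] n by (simp add: e_eq)
  then show "1 \<le> e"
    using N by simp
  have "1 / e \<le> 1 / (2 * N)"
    using \<open>2 * N \<le> e\<close> N by (intro divide_left_mono) auto
  also have "\<dots> \<le> Y"
    using N \<open>2 * real n \<le> N\<close> by (simp add: Y_def N_def[symmetric] field_simps)
  finally show "1 - Y \<le> 1 - 1 / e"
    by simp
  have "Y \<le> 1 / N"
    using N by (simp add: Y_def N_def[symmetric] divide_right_mono)
  moreover have "1 / N < 1"
    using N by simp
  ultimately have "Y < 1"
    by linarith
  then have "(1 - Y) powr (e - 1) \<le> exp (- ((e - 1) * Y))"
    using \<open>1 \<le> e\<close> by (intro powr_le_exp_of_le_one_minus) auto
  also have "\<dots> \<le> exp (- (real n * ln 2))"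
    using log_le_exponent_mult_gap[OF N _ _ ln2_ge_two_thirds] n Suc_mult_Suc_Suc_le_two_pow[OF n]
    by (simp add: e_eq Y_def N_def)
  also have "\<dots> = 1 / 2 ^ n"
    by (simp add: exp_minus exp_of_nat_mult inverse_eq_divide)
  finally show "(1 - Y) powr (e - 1) \<le> 1 / 2 ^ n" .
qed

lemma abs_deriv_Psi_lt_one_ge7:
  assumes "7 \<le> k" "d_lbd k \<le> d" "1/2 - 1/2^k \<le> x" "x \<le> 1/2"
  shows "Psi k d differentiable (at x) \<and> \<bar>deriv (Psi k d) x\<bar> < 1"
proof -
  define n where "n = k - 1"
  define N :: real where "N = 2 ^ n"
  have n: "6 \<le> n" "k = Suc n"
    using assms(1) by (simp_all add: n_def)
  have "(2::real) ^ 6 \<le> 2 ^ n"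
    using n by (intro power_increasing) auto
  then have N: "64 \<le> N"
    by (simp add: N_def)
  have d_lbd_eq: "d_lbd k - 1 = (N - 2) * (real n + 1) * ln 2 - 1"
    using n by (simp add: d_lbd_def N_def)
  have "(1/2::real) ^ (n - 1) * (1/2) = (1/2) ^ n"
    using n by (intro power_minus_mult) simp
  then have "(1/2) ^ (k - 2) = 2 / N" "(1/2) ^ (k - 1) = 1 / N"
    using n N by (simp_all add: N_def field_simps power_divide)
  moreover have "(d_lbd k - 1) * (1 / N) / (2 - 1 / N)\<^sup>2 * (real n * (2 / N) / (1 - 1 / N)\<^sup>2) < 1"
    using contraction_factor_lt_one[OF N _ mult_Suc_le_two_pow[OF n(1), folded N_def]]
      ln2_ge_two_thirds ln_2_less_1
    by (simp add: d_lbd_eq)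
  moreover have "(0::real) < 1/2 - 1/2^k" "1 / N < 2" "2 / N < 1"
    using N n by (simp_all add: field_simps)
  ultimately show ?thesis
    using assms n Psi_hat_left_endpoint_le[of n] d_lbd_gap_bounds[OF n(1)]
    by (intro abs_deriv_Psi_lt_one_on_interval[where a="1/2 - 1/2^k" and b="1/2"
          and r="1 - (1 - n / N) / N" and e="d_lbd k - 1" and c="1/N"])
      (simp_all add: N_def)
qed

theorem lemma3p3:
  fixes k :: nat and d x :: real
  assumes "k \<ge> 4"
    and "d_lbd k \<le> d" and "d \<le> d_ubd k"
    and "1/2 - 1/2^k \<le> x" and "x \<le> 1/2"
  shows "Psi k d differentiable (at x) \<and> \<bar>deriv (Psi k d) x\<bar> < 1"
proof -
  consider "k = 4" | "k = 5" | "k = 6" | "7 \<le> k"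
    using assms(1) by linarith
  then show ?thesis
  proof cases
    case 1
    then show ?thesis
      using abs_deriv_Psi_lt_one_k4[of d x] assms by (simp add: d_lbd_def)
  next
    case 2
    then show ?thesis
      using abs_deriv_Psi_lt_one_k5[of d x] assms by simp
  next
    case 3
    then show ?thesis
      using abs_deriv_Psi_lt_one_k6[of d x] assms by simp
  next
    case 4
    then show ?thesis
      using abs_deriv_Psi_lt_one_ge7[of k d x] assms by simp
  qed
qed

end
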